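(* Let $(Q,\mathcal M)$ be a modulated quiver with $Q$ connected, and suppose that every connected component of its complex quiver $\Gamma$ is one-cycle. Then: (1) $Q$ contains at most one cycle; (2) if $Q$ is a tree, then $Q$ contains a chain $v_1-v_2-\cdots-v_n$ with $n\ge2$ such that $\mathcal M(v_1)\ne\mathbb C$, $\mathcal M(v_n)\ne\mathbb C$ and $\mathcal M(v_i)=\mathbb C$ for all $2\le i\le n-1$.
   Context: Quivers $Q=(Q_0,Q_1,s,t)$ are finite; an arrow $\alpha$ goes from $s(\alpha)$ to $t(\alpha)$. A chain in a quiver is a sequence of vertices $u_1-u_2-\cdots-u_n$ together with pairwise distinct arrows $a_1,\dots,a_{n-1}$ such that each $a_k$ goes from $u_k$ to $u_{k+1}$ or from $u_{k+1}$ to $u_k$. A cycle is a cycle (loops included) of the underlying unoriented multigraph; $Q$ is a tree if its underlying graph is a tree. A connected quiver is one-cycle if its underlying (unoriented multi)graph, loops included, contains exactly one cycle. A modulation $\mathcal M$ of $Q$ assigns to each vertex $i$ a division ring $\mathcal M(i)\in\{\mathbb R,\mathbb C,\mathbb H\}$ ($\mathbb H$ the real quaternions) and to each arrow $\alpha$ a simple $\mathcal M(t(\alpha))$-$\mathcal M(s(\alpha))$-bimodule $\mathcal M(\alpha)$ on which $\mathbb R$ acts centrally; $(Q,\mathcal M)$ is a modulated quiver. Up to isomorphism there is exactly one such simple bimodule for each pair of these division rings other than $(\mathbb C,\mathbb C)$, and for $(\mathbb C,\mathbb C)$ there are exactly two: $\mathbb C$ with action $a\cdot z\cdot b=azb$,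 and $\overline{\mathbb C}$, which is $\mathbb C$ as a set with action $a\cdot z\cdot b=az\bar b$. The quiver $\Gamma$ of $(Q,\mathcal M)$: each $i\in Q_0$ with $\mathcal M(i)\in\{\mathbb R,\mathbb H\}$ gives one vertex $i$ of $\Gamma$; each $i$ with $\mathcal M(i)=\mathbb C$ gives two vertices $i,\bar i$. Each arrow $\alpha:i\to j$ of $Q$ gives arrows of $\Gamma$ as follows: if $\mathcal M(i)=\mathcal M(j)\in\{\mathbb R,\mathbb H\}$, one arrow $\alpha:i\to j$; if $\mathcal M(i)=\mathbb C$ and $\mathcal M(j)\in\{\mathbb R,\mathbb H\}$, arrows $\alpha:i\to j$, $\bar\alpha:\bar i\to j$; if $\mathcal M(i)\in\{\mathbb R,\mathbb H\}$ and $\mathcal M(j)=\mathbb C$, arrows $\alpha:i\to j$, $\bar\alpha:i\to\bar j$; if $\{\mathcal M(i),\mathcal M(j)\}=\{\mathbb R,\mathbb H\}$, two arrows $\alpha,\bar\alpha:i\to j$; if $\mathcal M(i)=\mathcal M(j)=\mathbb C$ and $\mathcal M(\alpha)=\mathbb C$, arrows $\alpha:i\to j$, $\bar\alpha:\bar i\to\bar j$; if $\mathcal M(i)=\mathcal M(j)=\mathbb C$ and $\mathcal M(\alpha)=\overline{\mathbb C}$, arrows $\alpha:\bar i\to j$, $\bar\alpha:i\to\bar j$. *)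

theory Defs
  imports Main
begin

datatype divring = RR | CC | HH

definition quiver :: "'v set \<Rightarrow> 'a set \<Rightarrow> ('a \<Rightarrow> 'v) \<Rightarrow> ('a \<Rightarrow> 'v) \<Rightarrow> bool" where
  "quiver V A s t \<longleftrightarrow> finite V \<and> finite A \<and> (\<forall>a\<in>A. s a \<in> V \<and> t a \<in> V)"

definition joins :: "('a \<Rightarrow> 'v) \<Rightarrow> ('a \<Rightarrow> 'v) \<Rightarrow> 'a \<Rightarrow> 'v \<Rightarrow> 'v \<Rightarrow> bool" where
  "joins s t a x y \<longleftrightarrow> (s a = x \<and> t a = y) \<or> (s a = y \<and> t a = x)"

definition adj :: "'a set \<Rightarrow> ('a \<Rightarrow> 'v) \<Rightarrow> ('a \<Rightarrow> 'v) \<Rightarrow> ('v \<times> 'v) set" where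
  "adj A s t = {(s a, t a) | a. a \<in> A} \<union> {(t a, s a) | a. a \<in> A}"

definition connected_quiver :: "'v set \<Rightarrow> 'a set \<Rightarrow> ('a \<Rightarrow> 'v) \<Rightarrow> ('a \<Rightarrow> 'v) \<Rightarrow> bool" where
  "connected_quiver V A s t \<longleftrightarrow> V \<noteq> {} \<and> (\<forall>u\<in>V. \<forall>v\<in>V. (u, v) \<in> (adj A s t)\<^sup>*)"

text \<open>A cycle of the underlying multigraph (loops included), identified with its set of arrows:
  a closed walk through k \<ge> 1 pairwise distinct vertices using k pairwise distinct arrows.\<close>
definition is_cycle :: "'v set \<Rightarrow> 'a set \<Rightarrow> ('a \<Rightarrow> 'v) \<Rightarrow> ('a \<Rightarrow> 'v) \<Rightarrow> 'a set \<Rightarrow> bool" where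
  "is_cycle V A s t C \<longleftrightarrow> (\<exists>us as. length us \<ge> 1 \<and> length as = length us \<and>
      distinct us \<and> distinct as \<and> set us \<subseteq> V \<and> set as \<subseteq> A \<and> set as = C \<and>
      (\<forall>i < length us. joins s t (as ! i) (us ! i) (us ! ((i + 1) mod length us))))"

definition one_cycle :: "'v set \<Rightarrow> 'a set \<Rightarrow> ('a \<Rightarrow> 'v) \<Rightarrow> ('a \<Rightarrow> 'v) \<Rightarrow> bool" where
  "one_cycle V A s t \<longleftrightarrow> connected_quiver V A s t \<and> (\<exists>!C. is_cycle V A s t C)"

definition is_tree :: "'v set \<Rightarrow> 'a set \<Rightarrow> ('a \<Rightarrow> 'v) \<Rightarrow> ('a \<Rightarrow> 'v) \<Rightarrow> bool" where
  "is_tree V A s t \<longleftrightarrow> connected_quiver V A s t \<and> (\<forall>C. \<not> is_cycle V A s t C)"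

definition is_chain :: "'v set \<Rightarrow> 'a set \<Rightarrow> ('a \<Rightarrow> 'v) \<Rightarrow> ('a \<Rightarrow> 'v) \<Rightarrow> 'v list \<Rightarrow> 'a list \<Rightarrow> bool" where
  "is_chain V A s t us as \<longleftrightarrow> us \<noteq> [] \<and> length as = length us - 1 \<and> distinct as \<and>
      set us \<subseteq> V \<and> set as \<subseteq> A \<and>
      (\<forall>i < length as. joins s t (as ! i) (us ! i) (us ! (i + 1)))"

definition comp_vertices :: "'v set \<Rightarrow> 'a set \<Rightarrow> ('a \<Rightarrow> 'v) \<Rightarrow> ('a \<Rightarrow> 'v) \<Rightarrow> 'v \<Rightarrow> 'v set" where
  "comp_vertices V A s t v = {w \<in> V. (v, w) \<in> (adj A s t)\<^sup>*}"

definition comp_arrows :: "'v set \<Rightarrow> 'a set \<Rightarrow> ('a \<Rightarrow> 'v) \<Rightarrow> ('a \<Rightarrow> 'v) \<Rightarrow> 'v \<Rightarrow> 'a set" where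
  "comp_arrows V A s t v = {a \<in> A. s a \<in> comp_vertices V A s t v}"

text \<open>Modulation: Mv assigns the division ring to each vertex; Mconj \<alpha> says that the simple
  bimodule on a C-C arrow \<alpha> is the conjugate one (otherwise it is C). For all other pairs of
  division rings the simple bimodule is unique up to isomorphism, so Mconj is ignored there.

  Quiver \<Gamma>: vertices (i,False) for every i, and (i,True) (= \<bar>i) when Mv i = CC.
  Arrows (\<alpha>,False) (= \<alpha>) and (\<alpha>,True) (= \<bar>\<alpha>); the latter exists unless both ends carry the
  same ring in {R,H}.\<close>
definition gamma_vertices :: "'v set \<Rightarrow> ('v \<Rightarrow> divring) \<Rightarrow> ('v \<times> bool) set" where
  "gamma_vertices V Mv = {(i, False) | i. i \<in> V} \<union> {(i, True) | i. i \<in> V \<and> Mv i = CC}"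

definition gamma_arrows :: "'a set \<Rightarrow> ('a \<Rightarrow> 'v) \<Rightarrow> ('a \<Rightarrow> 'v) \<Rightarrow> ('v \<Rightarrow> divring) \<Rightarrow> ('a \<times> bool) set" where
  "gamma_arrows A s t Mv = {(\<alpha>, False) | \<alpha>. \<alpha> \<in> A} \<union>
     {(\<alpha>, True) | \<alpha>. \<alpha> \<in> A \<and> \<not> (Mv (s \<alpha>) = Mv (t \<alpha>) \<and> Mv (s \<alpha>) \<noteq> CC)}"

definition gamma_src :: "('a \<Rightarrow> 'v) \<Rightarrow> ('a \<Rightarrow> 'v) \<Rightarrow> ('v \<Rightarrow> divring) \<Rightarrow> ('a \<Rightarrow> bool)
    \<Rightarrow> 'a \<times> bool \<Rightarrow> 'v \<times> bool" where
  "gamma_src s t Mv Mconj = (\<lambda>(\<alpha>, b).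
     (s \<alpha>, if Mv (s \<alpha>) \<noteq> CC then False
           else if Mv (t \<alpha>) \<noteq> CC then b
           else if Mconj \<alpha> then \<not> b else b))"

definition gamma_tgt :: "('a \<Rightarrow> 'v) \<Rightarrow> ('a \<Rightarrow> 'v) \<Rightarrow> ('v \<Rightarrow> divring) \<Rightarrow> ('a \<Rightarrow> bool)
    \<Rightarrow> 'a \<times> bool \<Rightarrow> 'v \<times> bool" where
  "gamma_tgt s t Mv Mconj = (\<lambda>(\<alpha>, b).
     (t \<alpha>, if Mv (t \<alpha>) \<noteq> CC then False else b))"

end

theory Submission
  imports Defs
begin

(* Every cycle of Q lifts to the complex quiver: following the cycle from a lift of one of its
   vertices, one returns to the starting vertex after one turn, or, when all vertices of the cycle
   carry C, after two turns, the second turn running through the conjugate sheet. Connectedness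
   of Q puts all these lifts into the component of a fixed vertex of the complex quiver, which has
   only one cycle; since a lifted cycle projects back onto the original one, Q has at most one
   cycle. Conversely, the cycle of that component projects to a closed walk in Q that can only
   backtrack at vertices not carrying C. If Q is a tree with at most one such vertex, starting
   the walk there it never backtracks, so it contains a cycle of Q, which is absurd. Hence there
   are two distinct vertices not carrying C, and a shortest walk between two such vertices is
   the required chain. *)

definition walk ::
    "'a set \<Rightarrow> ('a \<Rightarrow> 'v) \<Rightarrow> ('a \<Rightarrow> 'v) \<Rightarrow> (nat \<Rightarrow> 'v) \<Rightarrow> (nat \<Rightarrow> 'a) \<Rightarrow> nat \<Rightarrow> bool"
  where
  "walk A s t p a n \<longleftrightarrow> (\<forall>i<n. a i \<in> A \<and> joins s t (a i) (p i) (p (Suc i)))"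

lemma joins_same_arrow:
  assumes "joins s t a x y" "joins s t a x' y'"
  shows "(x = x' \<and> y = y') \<or> (x = y' \<and> y = x')"
  using assms unfolding joins_def by auto

lemma joins_adj: "e \<in> A \<Longrightarrow> joins s t e x y \<Longrightarrow> (x, y) \<in> adj A s t"
  unfolding adj_def joins_def by auto

lemma inj_on_lessThanI:
  assumes "\<And>m n. m < n \<Longrightarrow> n < L \<Longrightarrow> f m \<noteq> f n"
  shows "inj_on f {..<L::nat}"
proof (rule inj_onI)
  fix m n assume "m \<in> {..<L}" "n \<in> {..<L}" "f m = f n"
  then show "m = n" using assms[of m n] assms[of n m] by (cases m n rule: linorder_cases) auto
qed

lemma walk_mono: "walk A s t p a n \<Longrightarrow> m \<le> n \<Longrightarrow> walk A s t p a m"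
  unfolding walk_def by auto

lemma walk_rtrancl_adj:
  assumes "walk A s t p a n" "i \<le> n"
  shows "(p 0, p i) \<in> (adj A s t)\<^sup>*"
  using assms(2)
proof (induction i)
  case (Suc i)
  then have "(p i, p (Suc i)) \<in> adj A s t"
    using assms(1) by (intro joins_adj[of "a i"]) (auto simp: walk_def)
  with Suc show ?case by (meson Suc_leD rtrancl.rtrancl_into_rtrancl)
qed simp

lemma rtrancl_adj_walk:
  assumes "(u, w) \<in> (adj A s t)\<^sup>*"
  obtains p a n where "p 0 = u" "p n = w" "walk A s t p a n"
  using assms
proof (induction arbitrary: thesis rule: rtrancl_induct)
  case base
  show ?case by (rule base[of "\<lambda>_. u" 0 undefined]) (auto simp: walk_def)
next
  case (step w w')
  obtain p a n where pan: "p 0 = u" "p n = w" "walk A s t p a n" by (rule step.IH)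
  obtain \<alpha> where \<alpha>: "\<alpha> \<in> A" "joins s t \<alpha> w w'"
    using step.hyps(2) unfolding adj_def joins_def by auto
  show ?case
  proof (rule step.prems)
    show "(p(Suc n := w')) 0 = u" "(p(Suc n := w')) (Suc n) = w'" using pan by auto
    show "walk A s t (p(Suc n := w')) (a(n := \<alpha>)) (Suc n)"
      using pan \<alpha> unfolding walk_def by (auto simp: less_Suc_eq)
  qed
qed

lemma walk_vertex_in:
  assumes "quiver V A s t" "walk A s t p a n" "0 < n" "i \<le> n"
  shows "p i \<in> V"
proof -
  obtain j where j: "j < n" "i = j \<or> i = Suc j"
    using assms(3,4) by (metis Suc_pred le_neq_implies_less lessI)
  then have "a j \<in> A" "joins s t (a j) (p j) (p (Suc j))"
    using assms(2) unfolding walk_def by auto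
  then show ?thesis
    using assms(1) j(2) unfolding quiver_def joins_def by auto
qed

lemma closed_walk_is_cycle:
  assumes "walk A s t p a L" "1 \<le> L" "p L = p 0" "\<forall>i<L. p i \<in> V"
    and "inj_on p {..<L}" "inj_on a {..<L}"
  shows "is_cycle V A s t (a ` {..<L})"
  unfolding is_cycle_def
proof (intro exI[of _ "map p [0..<L]"] exI[of _ "map a [0..<L]"] conjI)
  show "distinct (map p [0..<L])" "distinct (map a [0..<L])"
    using assms(5,6) by (simp_all add: distinct_map atLeast0LessThan)
  show "\<forall>i<length (map p [0..<L]). joins s t (map a [0..<L] ! i) (map p [0..<L] ! i)
          (map p [0..<L] ! ((i + 1) mod length (map p [0..<L])))"
  proof (intro allI impI)
    fix i assume "i < length (map p [0..<L])"
    then have "i < L" by simp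
    moreover from this have "p ((i + 1) mod L) = p (Suc i)"
      using assms(3) by (cases "Suc i = L") auto
    ultimately show "joins s t (map a [0..<L] ! i) (map p [0..<L] ! i)
          (map p [0..<L] ! ((i + 1) mod length (map p [0..<L])))"
      using assms(1) \<open>1 \<le> L\<close> by (simp add: walk_def)
  qed
  show "1 \<le> length (map p [0..<L])" "length (map a [0..<L]) = length (map p [0..<L])"
    using assms(2) by simp_all
  show "set (map p [0..<L]) \<subseteq> V" using assms(4) by auto
  show "set (map a [0..<L]) \<subseteq> A" using assms(1) by (auto simp: walk_def)
  show "set (map a [0..<L]) = a ` {..<L}" by (auto simp: atLeast0LessThan)
qed

(* A shortest closed subwalk has distinct vertices, and distinct arrows unless it is a
   backtrack of length two. *)
lemma nonbacktracking_closed_walk_has_cycle: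
  assumes walk: "walk A s t p a k" and k: "1 \<le> k" and closed: "p k = p 0"
    and V: "\<forall>i\<le>k. p i \<in> V" and nb: "\<forall>i. Suc i < k \<longrightarrow> a i \<noteq> a (Suc i)"
  shows "\<exists>C. is_cycle V A s t C"
proof -
  define repeats where "repeats d \<longleftrightarrow> 1 \<le> d \<and> (\<exists>i. i + d \<le> k \<and> p i = p (i + d))" for d
  define L where "L = (LEAST d. repeats d)"
  have "repeats k" using k closed unfolding repeats_def by auto
  then have "repeats L" unfolding L_def by (rule LeastI)
  then obtain i where i: "1 \<le> L" "i + L \<le> k" "p i = p (i + L)"
    unfolding repeats_def by auto
  have dist: "p (i + m) \<noteq> p (i + n)" if "m < n" "n < L" for m n
  proof
    assume "p (i + m) = p (i + n)"
    then have "repeats (n - m)" unfolding repeats_def using that i by (auto intro!: exI[of _ "i + m"])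
    then have "L \<le> n - m" unfolding L_def by (rule Least_le)
    with that show False by auto
  qed
  have jn: "joins s t (a (i + m)) (p (i + m)) (p (i + m + 1))" if "m < L" for m
    using walk that i unfolding walk_def by auto
  have adist: "a (i + m) \<noteq> a (i + n)" if mn: "m < n" "n < L" for m n
  proof
    assume eq: "a (i + m) = a (i + n)"
    have "p (i + m) = p (i + n + 1) \<and> p (i + m + 1) = p (i + n)"
      using joins_same_arrow[OF jn[of m, unfolded eq] jn[of n]] dist[OF mn] mn by auto
    moreover from this have n: "n = m + 1"
      using dist[of "m + 1" n] mn by (cases "m + 1 < n") auto
    ultimately have returns: "p (i + m) = p (i + (m + 2))" by (simp add: add.assoc)
    show False
    proof (cases "m + 2 < L")
      case True
      with returns dist[of m "m + 2"] show False by simp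
    next
      case False
      then have L: "L = m + 2" using n mn by auto
      show False
      proof (cases "m = 0")
        case True
        with L i(2) eq n nb show False by auto
      next
        case False
        with returns L i(3) dist[of 0 m] mn show False by auto
      qed
    qed
  qed
  have "is_cycle V A s t ((\<lambda>m. a (i + m)) ` {..<L})"
  proof (rule closed_walk_is_cycle)
    show "walk A s t (\<lambda>m. p (i + m)) (\<lambda>m. a (i + m)) L"
      using walk i unfolding walk_def by auto
    show "inj_on (\<lambda>m. p (i + m)) {..<L}" "inj_on (\<lambda>m. a (i + m)) {..<L}"
      using dist adist by (auto intro: inj_on_lessThanI)
  qed (use i V in auto)
  then show ?thesis by blast
qed

lemma walk_shortcut:
  assumes walk: "walk A s t p a n" and ij: "i < j" "j \<le> n" and eq: "p i = p j"
  obtains p' a' where "walk A s t p' a' (n - (j - i))" "p' 0 = p 0" "p' (n - (j - i)) = p n"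
proof
  define d where "d = j - i"
  have d: "0 < d" "j = i + d" using ij unfolding d_def by auto
  define p' where "p' m = (if m \<le> i then p m else p (m + d))" for m
  define a' where "a' m = (if m < i then a m else a (m + d))" for m
  show "p' 0 = p 0" unfolding p'_def by simp
  have "n - d \<le> i \<Longrightarrow> n = j" using ij d by auto
  then show "p' (n - (j - i)) = p n"
    using eq d unfolding p'_def d_def[symmetric] by auto
  show "walk A s t p' a' (n - (j - i))"
    unfolding walk_def d_def[symmetric]
  proof (intro allI impI)
    fix m assume m: "m < n - d"
    have "a' m = a (if m < i then m else m + d) \<and> p' m = p (if m < i then m else m + d) \<and>
        p' (Suc m) = p (Suc (if m < i then m else m + d))"
      using eq d unfolding p'_def a'_def by auto
    moreover have "(if m < i then m else m + d) < n" using m d ij by auto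
    ultimately show "a' m \<in> A \<and> joins s t (a' m) (p' m) (p' (Suc m))"
      using walk unfolding walk_def by auto
  qed
qed

lemma walk_is_chain:
  assumes "quiver V A s t" and walk: "walk A s t p a n" and "0 < n"
    and dist: "\<And>i j. i < j \<Longrightarrow> j \<le> n \<Longrightarrow> p i \<noteq> p j"
  shows "is_chain V A s t (map p [0..<Suc n]) (map a [0..<n])"
  unfolding is_chain_def
proof (intro conjI)
  have "a i \<noteq> a j" if "i < j" "j < n" for i j
  proof
    assume "a i = a j"
    moreover have "joins s t (a i) (p i) (p (Suc i))" "joins s t (a j) (p j) (p (Suc j))"
      using walk that unfolding walk_def by auto
    ultimately have "joins s t (a j) (p i) (p (Suc i))" "joins s t (a j) (p j) (p (Suc j))"
      by simp_all
    from joins_same_arrow[OF this] show False using dist[of i j] dist[of i "Suc j"] that by auto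
  qed
  then have "inj_on a {..<n}" by (rule inj_on_lessThanI)
  then show "distinct (map a [0..<n])" by (simp add: distinct_map atLeast0LessThan)
  show "set (map p [0..<Suc n]) \<subseteq> V"
    using walk_vertex_in[OF assms(1) walk \<open>0 < n\<close>] by auto
  show "\<forall>i<length (map a [0..<n]). joins s t (map a [0..<n] ! i) (map p [0..<Suc n] ! i)
      (map p [0..<Suc n] ! (i + 1))"
    using walk unfolding walk_def by (simp del: upt_Suc)
qed (use walk in \<open>auto simp: walk_def\<close>)

lemma connected_quiver_chain_between:
  assumes q: "quiver V A s t" and conn: "connected_quiver V A s t"
    and r: "r1 \<in> V" "r2 \<in> V" "r1 \<noteq> r2" "P r1" "P r2"
  shows "\<exists>us as. is_chain V A s t us as \<and> length us \<ge> 2 \<and> P (hd us) \<and> P (last us) \<and>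
           (\<forall>i. 1 \<le> i \<and> i < length us - 1 \<longrightarrow> \<not> P (us ! i))"
proof -
  define linking where
    "linking n \<longleftrightarrow> (\<exists>p a. walk A s t p a n \<and> P (p 0) \<and> P (p n) \<and> p 0 \<noteq> p n)" for n
  obtain p0 a0 n0 where "p0 0 = r1" "p0 n0 = r2" "walk A s t p0 a0 n0"
    using conn r(1,2) unfolding connected_quiver_def by (meson rtrancl_adj_walk)
  then have "linking n0" unfolding linking_def using r by auto
  define n where "n = (LEAST n. linking n)"
  have "linking n" unfolding n_def by (rule LeastI) fact
  then obtain p a where walk: "walk A s t p a n" and ends: "P (p 0)" "P (p n)" "p 0 \<noteq> p n"
    unfolding linking_def by blast
  have minimal: "n \<le> m" if "linking m" for m
    using that unfolding n_def by (rule Least_le)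
  have n: "0 < n" using ends(3) by (cases n) auto
  have dist: "p i \<noteq> p j" if "i < j" "j \<le> n" for i j
  proof
    assume "p i = p j"
    with walk_shortcut[OF walk that] ends obtain p' a'
      where "walk A s t p' a' (n - (j - i))" "p' 0 = p 0" "p' (n - (j - i)) = p n" by blast
    with ends have "linking (n - (j - i))" unfolding linking_def by metis
    with minimal that show False by fastforce
  qed
  have interior: "\<not> P (p i)" if "0 < i" "i < n" for i
  proof
    assume "P (p i)"
    with walk_mono[OF walk] ends(1) dist[of 0 i] that have "linking i"
      unfolding linking_def by (metis less_imp_le)
    with minimal that show False by fastforce
  qed
  show ?thesis
  proof (intro exI conjI)
    show "is_chain V A s t (map p [0..<Suc n]) (map a [0..<n])"
      by (rule walk_is_chain[OF q walk n dist])
  qed (use n ends interior in \<open>auto simp: hd_map last_map nth_append simp del: upt_Suc\<close>)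
qed

definition cycle_walk ::
    "'v set \<Rightarrow> 'a set \<Rightarrow> ('a \<Rightarrow> 'v) \<Rightarrow> ('a \<Rightarrow> 'v) \<Rightarrow> 'a set \<Rightarrow> (nat \<Rightarrow> 'v) \<Rightarrow> (nat \<Rightarrow> 'a) \<Rightarrow> nat \<Rightarrow> bool"
  where
  "cycle_walk V A s t C p a k \<longleftrightarrow> 1 \<le> k \<and> range p \<subseteq> V \<and> (\<forall>n. walk A s t p a n) \<and>
     (\<forall>m m'. p m = p m' \<longleftrightarrow> m mod k = m' mod k) \<and> (\<forall>m m'. a m = a m' \<longleftrightarrow> m mod k = m' mod k) \<and>
     range a = C"

lemma is_cycle_imp_cycle_walk:
  assumes "is_cycle V A s t C"
  obtains p a k where "cycle_walk V A s t C p a k"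
proof -
  obtain us as where cyc: "1 \<le> length us" "length as = length us" "distinct us" "distinct as"
    "set us \<subseteq> V" "set as \<subseteq> A" "set as = C"
    "\<forall>i<length us. joins s t (as ! i) (us ! i) (us ! ((i + 1) mod length us))"
    using assms unfolding is_cycle_def by blast
  define k where "k = length us"
  have k: "0 < k" using cyc(1) by (simp add: k_def Suc_le_eq)
  then have lt: "i mod k < length us" "i mod k < length as" for i
    using cyc(2) by (simp_all add: k_def)
  define p where "p i = us ! (i mod k)" for i
  define a where "a i = as ! (i mod k)" for i
  show ?thesis
  proof (rule that, unfold cycle_walk_def, intro conjI allI)
    show "1 \<le> k" "range p \<subseteq> V" using k lt cyc(5) by (auto simp: p_def)
    fix n
    have "joins s t (a i) (p i) (p (Suc i))" for i
      using cyc(8)[rule_format, OF lt(1)[of i]] by (simp add: k_def p_def a_def mod_Suc_eq)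
    then show "walk A s t p a n"
      using cyc(6) lt unfolding walk_def a_def by auto
  next
    fix m m'
    show "p m = p m' \<longleftrightarrow> m mod k = m' mod k" "a m = a m' \<longleftrightarrow> m mod k = m' mod k"
      using cyc(3,4) lt by (simp_all add: p_def a_def nth_eq_iff_index_eq)
  next
    have "set as \<subseteq> range a"
    proof
      fix x assume "x \<in> set as"
      then obtain i where "i < k" "x = as ! i" by (auto simp: in_set_conv_nth k_def cyc(2))
      then show "x \<in> range a" unfolding a_def by (metis mod_less rangeI)
    qed
    then show "range a = C" using cyc(7) lt by (auto simp: a_def)
  qed
qed

lemma cycle_walk_shift:
  assumes "cycle_walk V A s t C p a k"
  shows "cycle_walk V A s t C (\<lambda>i. p (j + i)) (\<lambda>i. a (j + i)) k"
proof -
  have k: "1 \<le> k" and pk: "\<And>m m'. p m = p m' \<longleftrightarrow> m mod k = m' mod k"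
    and ak: "\<And>m m'. a m = a m' \<longleftrightarrow> m mod k = m' mod k"
    using assms unfolding cycle_walk_def by auto
  have "a i \<in> range (\<lambda>i. a (j + i))" for i
  proof
    have "j + (k * j + i - j) = k * j + i" using k by (simp add: trans_le_add1)
    then show "a i = a (j + (k * j + i - j))" using ak by simp
  qed simp
  then have "range (\<lambda>i. a (j + i)) = C" using assms unfolding cycle_walk_def by auto
  moreover have "(j + m) mod k = (j + m') mod k \<longleftrightarrow> m mod k = m' mod k" for m m'
    by (simp add: nat_mod_eq_iff)
  moreover have "walk A s t (\<lambda>i. p (j + i)) (\<lambda>i. a (j + i)) n" for n
    using assms unfolding cycle_walk_def walk_def
    by (metis add_Suc_right add_less_cancel_left trans_less_add2)
  ultimately show ?thesis
    using assms pk ak unfolding cycle_walk_def by auto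
qed

lemma cycle_walk_start:
  assumes "cycle_walk V A s t C p a k"
  obtains p' a' where "cycle_walk V A s t C p' a' k" "P (p' 0) \<or> (\<forall>i. \<not> P (p' i))"
proof (cases "\<exists>j. P (p j)")
  case True
  then obtain j where "P (p j)" by blast
  with cycle_walk_shift[OF assms, of j] that show ?thesis by simp
qed (use assms that in blast)

lemma cycle_walk_periodic:
  assumes "cycle_walk V A s t C p a k"
  shows "p (i + k) = p i" "a (i + k) = a i"
  using assms unfolding cycle_walk_def by simp_all

lemma cycle_walk_arrows_image:
  assumes "cycle_walk V A s t C p a k" "k \<le> L"
  shows "a ` {..<L} = C"
proof -
  have "a i \<in> a ` {..<L}" for i
  proof (rule image_eqI)
    show "a i = a (i mod k)" "i mod k \<in> {..<L}"
      using assms unfolding cycle_walk_def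
      by (auto simp: Suc_le_eq intro: less_le_trans[OF mod_less_divisor])
  qed
  then show ?thesis using assms unfolding cycle_walk_def by auto
qed

lemma cycle_walk_inj_on:
  assumes "cycle_walk V A s t C p a k"
  shows "inj_on p {..<k}" "inj_on a {..<k}"
  using assms unfolding cycle_walk_def by (auto intro!: inj_on_lessThanI)

lemma mod_eq_less_double:
  fixes m m' k :: nat
  assumes "m < m'" "m' < 2 * k" "m mod k = m' mod k"
  shows "m' = m + k"
proof -
  obtain q where q: "m' - m = k * q"
    using assms by (metis less_imp_le mod_eq_dvd_iff_nat dvdE)
  moreover have "k * q < k * 2" "0 < k * q" using q assms by linarith+
  ultimately have "q = 1" by simp
  with q assms(1) show ?thesis by simp
qed

lemma walk_in_component:
  assumes walk: "walk A s t p a n" and z: "(z, p 0) \<in> (adj A s t)\<^sup>*" and V: "\<forall>i\<le>n. p i \<in> V"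
  shows "\<forall>i\<le>n. p i \<in> comp_vertices V A s t z" "walk (comp_arrows V A s t z) s t p a n"
proof -
  show comp: "\<forall>i\<le>n. p i \<in> comp_vertices V A s t z"
    using V walk_rtrancl_adj[OF walk] rtrancl_trans[OF z] unfolding comp_vertices_def by blast
  have "s (a i) \<in> {p i, p (Suc i)}" "a i \<in> A" if "i < n" for i
    using walk that unfolding walk_def joins_def by auto
  then show "walk (comp_arrows V A s t z) s t p a n"
    using comp walk unfolding walk_def comp_arrows_def by fastforce
qed

lemma loop_is_cycle:
  assumes "quiver V A s t" "\<alpha> \<in> A" "s \<alpha> = t \<alpha>"
  shows "is_cycle V A s t {\<alpha>}"
  unfolding is_cycle_def
  using assms by (intro exI[of _ "[s \<alpha>]"] exI[of _ "[\<alpha>]"]) (auto simp: quiver_def joins_def)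

lemma gamma_joins_project:
  "joins (gamma_src s t Mv Mconj) (gamma_tgt s t Mv Mconj) e y y' \<Longrightarrow> joins s t (fst e) (fst y) (fst y')"
  unfolding joins_def gamma_src_def gamma_tgt_def by (cases e) auto

lemma mem_gamma_vertices_iff: "(u, b) \<in> gamma_vertices V Mv \<longleftrightarrow> u \<in> V \<and> (b \<longrightarrow> Mv u = CC)"
  unfolding gamma_vertices_def by auto

locale modulated_quiver =
  fixes V :: "'v set" and A :: "'a set" and s t :: "'a \<Rightarrow> 'v"
    and Mv :: "'v \<Rightarrow> divring" and Mconj :: "'a \<Rightarrow> bool"
  assumes quiver: "quiver V A s t"
begin

abbreviation "GV \<equiv> gamma_vertices V Mv"
abbreviation "GA \<equiv> gamma_arrows A s t Mv"
abbreviation "gsrc \<equiv> gamma_src s t Mv Mconj"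
abbreviation "gtgt \<equiv> gamma_tgt s t Mv Mconj"

text \<open>Lifting an arrow \<alpha> of Q, traversed from u to w, to the arrow of \<Gamma> leaving the sheet
  (u, \<beta>): the bar flag of that arrow and the sheet of w it arrives at.\<close>

definition lift_bar :: "'a \<Rightarrow> 'v \<Rightarrow> 'v \<Rightarrow> bool \<Rightarrow> bool" where
  "lift_bar \<alpha> u w \<beta> = (if s \<alpha> = u \<and> t \<alpha> = w
     then (if Mv (s \<alpha>) \<noteq> CC then False else if Mv (t \<alpha>) \<noteq> CC then \<beta> else \<beta> \<noteq> Mconj \<alpha>)
     else (if Mv (t \<alpha>) \<noteq> CC then False else \<beta>))"

definition lift_sheet :: "'a \<Rightarrow> 'v \<Rightarrow> 'v \<Rightarrow> bool \<Rightarrow> bool" where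
  "lift_sheet \<alpha> u w \<beta> = (if s \<alpha> = u \<and> t \<alpha> = w
     then snd (gtgt (\<alpha>, lift_bar \<alpha> u w \<beta>))
     else snd (gsrc (\<alpha>, lift_bar \<alpha> u w \<beta>)))"

lemma lift_step:
  assumes "\<alpha> \<in> A" "joins s t \<alpha> u w" "(u, \<beta>) \<in> GV"
  shows "(\<alpha>, lift_bar \<alpha> u w \<beta>) \<in> GA" "(w, lift_sheet \<alpha> u w \<beta>) \<in> GV"
    "joins gsrc gtgt (\<alpha>, lift_bar \<alpha> u w \<beta>) (u, \<beta>) (w, lift_sheet \<alpha> u w \<beta>)"
proof -
  have "w \<in> V" using quiver assms(1,2) unfolding quiver_def joins_def by auto
  then show "(\<alpha>, lift_bar \<alpha> u w \<beta>) \<in> GA" "(w, lift_sheet \<alpha> u w \<beta>) \<in> GV"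
    using assms unfolding gamma_arrows_def gamma_vertices_def lift_sheet_def lift_bar_def
      gamma_src_def gamma_tgt_def joins_def
    by auto
  show "joins gsrc gtgt (\<alpha>, lift_bar \<alpha> u w \<beta>) (u, \<beta>) (w, lift_sheet \<alpha> u w \<beta>)"
    using assms unfolding gamma_vertices_def lift_sheet_def lift_bar_def gamma_src_def
      gamma_tgt_def joins_def
    by auto
qed

lemma lift_swap_sheet:
  assumes "joins s t \<alpha> u w" "Mv u = CC" "Mv w = CC"
  shows "lift_bar \<alpha> u w (\<not> \<beta>) = (\<not> lift_bar \<alpha> u w \<beta>)"
    "lift_sheet \<alpha> u w (\<not> \<beta>) = (\<not> lift_sheet \<alpha> u w \<beta>)"
  using assms unfolding lift_sheet_def lift_bar_def gamma_src_def gamma_tgt_def joins_def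
  by auto

primrec lift_sheets :: "(nat \<Rightarrow> 'v) \<Rightarrow> (nat \<Rightarrow> 'a) \<Rightarrow> bool \<Rightarrow> nat \<Rightarrow> bool" where
  "lift_sheets p a \<beta> 0 = \<beta>"
| "lift_sheets p a \<beta> (Suc i) = lift_sheet (a i) (p i) (p (Suc i)) (lift_sheets p a \<beta> i)"

definition lift_vertices :: "(nat \<Rightarrow> 'v) \<Rightarrow> (nat \<Rightarrow> 'a) \<Rightarrow> bool \<Rightarrow> nat \<Rightarrow> 'v \<times> bool" where
  "lift_vertices p a \<beta> i = (p i, lift_sheets p a \<beta> i)"

definition lift_arrows :: "(nat \<Rightarrow> 'v) \<Rightarrow> (nat \<Rightarrow> 'a) \<Rightarrow> bool \<Rightarrow> nat \<Rightarrow> 'a \<times> bool" where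
  "lift_arrows p a \<beta> i = (a i, lift_bar (a i) (p i) (p (Suc i)) (lift_sheets p a \<beta> i))"

lemma walk_lift:
  assumes walk: "walk A s t p a n" and start: "(p 0, \<beta>) \<in> GV"
  shows "walk GA gsrc gtgt (lift_vertices p a \<beta>) (lift_arrows p a \<beta>) n"
    "\<forall>i\<le>n. lift_vertices p a \<beta> i \<in> GV"
proof -
  have step: "lift_arrows p a \<beta> i \<in> GA \<and> lift_vertices p a \<beta> (Suc i) \<in> GV \<and>
      joins gsrc gtgt (lift_arrows p a \<beta> i) (lift_vertices p a \<beta> i) (lift_vertices p a \<beta> (Suc i))"
    if "i < n" "lift_vertices p a \<beta> i \<in> GV" for i
    using lift_step[of "a i" "p i" "p (Suc i)" "lift_sheets p a \<beta> i"] walk that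
    unfolding walk_def lift_vertices_def lift_arrows_def by simp
  show vertices: "\<forall>i\<le>n. lift_vertices p a \<beta> i \<in> GV"
  proof (intro allI impI)
    fix i assume "i \<le> n" then show "lift_vertices p a \<beta> i \<in> GV"
      by (induction i) (use start step in \<open>auto simp: lift_vertices_def\<close>)
  qed
  show "walk GA gsrc gtgt (lift_vertices p a \<beta>) (lift_arrows p a \<beta>) n"
    using step vertices unfolding walk_def by auto
qed

lemma path_lift:
  assumes "(u, w) \<in> (adj A s t)\<^sup>*" "(u, \<beta>) \<in> GV"
  obtains \<beta>' where "(w, \<beta>') \<in> GV" "((u, \<beta>), (w, \<beta>')) \<in> (adj GA gsrc gtgt)\<^sup>*"
proof -
  obtain p a n where p: "p 0 = u" "p n = w" and walk: "walk A s t p a n"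
    using assms(1) by (rule rtrancl_adj_walk)
  have "(p 0, \<beta>) \<in> GV" using assms(2) p by simp
  note lifted = walk_lift[OF walk this]
  show ?thesis
  proof
    show "(w, lift_sheets p a \<beta> n) \<in> GV"
      using lifted(2) p by (auto simp: lift_vertices_def)
    show "((u, \<beta>), (w, lift_sheets p a \<beta> n)) \<in> (adj GA gsrc gtgt)\<^sup>*"
      using walk_rtrancl_adj[OF lifted(1) order_refl] p by (simp add: lift_vertices_def)
  qed
qed

lemma lift_sheets_add:
  "lift_sheets p a \<beta> (k + i) = lift_sheets (\<lambda>i. p (k + i)) (\<lambda>i. a (k + i)) (lift_sheets p a \<beta> k) i"
  by (induction i) simp_all

lemma lift_sheets_swap:
  assumes "walk A s t p a n" "i \<le> n" "\<forall>j. Mv (p j) = CC"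
  shows "lift_sheets p a (\<not> \<beta>) i = (\<not> lift_sheets p a \<beta> i)"
  using assms(2)
proof (induction i)
  case (Suc i)
  then have "joins s t (a i) (p i) (p (Suc i))" using assms(1) unfolding walk_def by simp
  with Suc lift_swap_sheet(2) assms(3) show ?case by simp
qed simp

lemma lift_sheets_antiperiodic:
  assumes cw: "cycle_walk V A s t C p a k" and allC: "\<forall>j. Mv (p j) = CC"
    and flip: "lift_sheets p a \<beta> k \<noteq> \<beta>"
  shows "lift_sheets p a \<beta> (k + i) = (\<not> lift_sheets p a \<beta> i)"
proof -
  have "(\<lambda>i. p (k + i)) = p" "(\<lambda>i. a (k + i)) = a"
    using cycle_walk_periodic[OF cw] by (simp_all add: add.commute)
  moreover have "walk A s t p a i" using cw unfolding cycle_walk_def by blast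
  ultimately show ?thesis
    using lift_sheets_add[of p a \<beta> k i] lift_sheets_swap[OF _ order_refl allC] flip by auto
qed

lemma lifted_cycle_window:
  assumes cw: "cycle_walk V A s t C p a k"
    and start: "(p 0, \<beta>) \<in> GV" "(z, (p 0, \<beta>)) \<in> (adj GA gsrc gtgt)\<^sup>*"
    and L: "k \<le> L" "lift_vertices p a \<beta> L = lift_vertices p a \<beta> 0"
    and inj: "inj_on (lift_vertices p a \<beta>) {..<L}" "inj_on (lift_arrows p a \<beta>) {..<L}"
  shows "\<exists>D. is_cycle (comp_vertices GV GA gsrc gtgt z) (comp_arrows GV GA gsrc gtgt z) gsrc gtgt D
           \<and> fst ` D = C"
proof (intro exI conjI)
  have "walk A s t p a L" using cw unfolding cycle_walk_def by blast
  note lifted = walk_lift[OF this start(1)]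
  have "(z, lift_vertices p a \<beta> 0) \<in> (adj GA gsrc gtgt)\<^sup>*"
    using start(2) by (simp add: lift_vertices_def)
  note in_comp = walk_in_component[OF lifted(1) this lifted(2)]
  show "is_cycle (comp_vertices GV GA gsrc gtgt z) (comp_arrows GV GA gsrc gtgt z) gsrc gtgt
      (lift_arrows p a \<beta> ` {..<L})"
    using closed_walk_is_cycle[OF in_comp(2) _ L(2) _ inj] in_comp(1) L(1) cw
    unfolding cycle_walk_def by auto
  have "fst ` lift_arrows p a \<beta> ` {..<L} = a ` {..<L}"
    by (force simp: lift_arrows_def)
  then show "fst ` lift_arrows p a \<beta> ` {..<L} = C"
    using cycle_walk_arrows_image[OF cw L(1)] by simp
qed

(* Lifting along C-C arrows commutes with swapping the two sheets, so the second turn retraces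
   the first one on the opposite sheets. *)
lemma lift_closes_after_two_turns:
  assumes cw: "cycle_walk V A s t C p a k" and allC: "\<forall>i. Mv (p i) = CC"
    and flip: "lift_sheets p a \<beta> k \<noteq> \<beta>"
  shows "lift_vertices p a \<beta> (2 * k) = lift_vertices p a \<beta> 0"
    "inj_on (lift_vertices p a \<beta>) {..<2 * k}" "inj_on (lift_arrows p a \<beta>) {..<2 * k}"
proof -
  let ?x = "lift_vertices p a \<beta>" and ?e = "lift_arrows p a \<beta>"
  note anti = lift_sheets_antiperiodic[OF cw allC flip]
  have period: "p (k + i) = p i" "a (k + i) = a i" for i
    using cycle_walk_periodic[OF cw] by (simp_all add: add.commute)
  have same_fiber: "m' = k + m" if "m < m'" "m' < 2 * k" "p m = p m' \<or> a m = a m'" for m m'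
    using that cw mod_eq_less_double unfolding cycle_walk_def by (metis add.commute)
  show "?x (2 * k) = ?x 0"
    using anti[of k] flip period[of k] period[of 0] by (simp add: lift_vertices_def mult_2)
  show "inj_on ?x {..<2 * k}"
  proof (rule inj_on_lessThanI)
    fix m m' assume m: "m < m'" "m' < 2 * k"
    show "?x m \<noteq> ?x m'"
    proof
      assume eq: "?x m = ?x m'"
      then have "m' = k + m" using same_fiber[OF m] by (simp add: lift_vertices_def)
      with eq anti[of m] show False by (simp add: lift_vertices_def)
    qed
  qed
  have "joins s t (a i) (p i) (p (Suc i))" for i
    using cw unfolding cycle_walk_def walk_def by blast
  moreover have "p (Suc (k + i)) = p (Suc i)" for i using period[of "Suc i"] by simp
  ultimately have bar_flip: "snd (?e (k + i)) = (\<not> snd (?e i))" for i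
    using lift_swap_sheet(1) allC anti period by (simp add: lift_arrows_def)
  show "inj_on ?e {..<2 * k}"
  proof (rule inj_on_lessThanI)
    fix m m' assume m: "m < m'" "m' < 2 * k"
    show "?e m \<noteq> ?e m'"
    proof
      assume eq: "?e m = ?e m'"
      then have "m' = k + m" using same_fiber[OF m] by (simp add: lift_arrows_def)
      with eq bar_flip[of m] show False by simp
    qed
  qed
qed

lemma cycle_lifts_to_component:
  assumes conn: "connected_quiver V A s t" and z: "z \<in> GV" and C: "is_cycle V A s t C"
  shows "\<exists>D. is_cycle (comp_vertices GV GA gsrc gtgt z) (comp_arrows GV GA gsrc gtgt z) gsrc gtgt D
           \<and> fst ` D = C"
proof -
  obtain p0 a0 k where "cycle_walk V A s t C p0 a0 k"
    using C by (rule is_cycle_imp_cycle_walk)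
  then obtain p a where cw: "cycle_walk V A s t C p a k"
    and start: "Mv (p 0) \<noteq> CC \<or> (\<forall>i. Mv (p i) = CC)"
    by (rule cycle_walk_start[where P = "\<lambda>v. Mv v \<noteq> CC"]) auto
  have "fst z \<in> V" "p 0 \<in> V" using z cw unfolding cycle_walk_def gamma_vertices_def by auto
  with conn have "(fst z, p 0) \<in> (adj A s t)\<^sup>*" unfolding connected_quiver_def by blast
  then obtain \<beta> where lift0: "(p 0, \<beta>) \<in> GV" "(z, (p 0, \<beta>)) \<in> (adj GA gsrc gtgt)\<^sup>*"
    using path_lift[of "fst z" "p 0" "snd z"] z by auto
  let ?x = "lift_vertices p a \<beta>"
  show ?thesis
  proof (cases "?x k = ?x 0")
    case True
    have "inj_on ?x {..<k}" "inj_on (lift_arrows p a \<beta>) {..<k}"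
      using cycle_walk_inj_on[OF cw]
      by (auto intro!: inj_on_imageI2[of fst] simp: comp_def lift_vertices_def lift_arrows_def)
    with True show ?thesis by (intro lifted_cycle_window[OF cw lift0 order_refl])
  next
    case False
    have pk: "p k = p 0" using cycle_walk_periodic(1)[OF cw, of 0] by simp
    have "walk A s t p a k" using cw unfolding cycle_walk_def by blast
    from walk_lift(2)[OF this lift0(1)] have "?x k \<in> GV" by blast
    then have allC: "\<forall>i. Mv (p i) = CC"
      using start False lift0(1) pk by (auto simp: lift_vertices_def mem_gamma_vertices_iff)
    have "lift_sheets p a \<beta> k \<noteq> \<beta>" using False pk by (simp add: lift_vertices_def)
    from lift_closes_after_two_turns[OF cw allC this] show ?thesis
      by (intro lifted_cycle_window[OF cw lift0]) simp_all
  qed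
qed

lemma lifts_of_same_arrow_meet_at_noncomplex:
  assumes "e \<noteq> e'" "fst e = fst e'" "s (fst e) \<noteq> t (fst e)"
    and "joins gsrc gtgt e y1 y" "joins gsrc gtgt e' y y2"
  shows "Mv (fst y) \<noteq> CC"
  using assms unfolding joins_def gamma_src_def gamma_tgt_def
  by (cases e, cases e') (auto split: if_splits)

lemma gamma_walk_project:
  assumes "walk GA gsrc gtgt x e n"
  shows "walk A s t (\<lambda>i. fst (x i)) (\<lambda>i. fst (e i)) n"
  unfolding walk_def
proof (intro allI impI conjI)
  fix i assume "i < n"
  with assms have "e i \<in> GA" "joins gsrc gtgt (e i) (x i) (x (Suc i))"
    unfolding walk_def by auto
  then show "fst (e i) \<in> A" "joins s t (fst (e i)) (fst (x i)) (fst (x (Suc i)))"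
    by (auto simp: gamma_arrows_def intro: gamma_joins_project)
qed

lemma gamma_cycle_projects_to_cycle:
  assumes D: "is_cycle V' A' gsrc gtgt D" and sub: "V' \<subseteq> GV" "A' \<subseteq> GA"
    and unique: "\<And>r1 r2. r1 \<in> V \<Longrightarrow> r2 \<in> V \<Longrightarrow> Mv r1 \<noteq> CC \<Longrightarrow> Mv r2 \<noteq> CC \<Longrightarrow> r1 = r2"
  shows "\<exists>C. is_cycle V A s t C"
proof (rule ccontr)
  assume acyclic: "\<nexists>C. is_cycle V A s t C"
  obtain x0 e0 k where "cycle_walk V' A' gsrc gtgt D x0 e0 k"
    using D by (rule is_cycle_imp_cycle_walk)
  then obtain x e where cw: "cycle_walk V' A' gsrc gtgt D x e k"
    and start: "Mv (fst (x 0)) \<noteq> CC \<or> (\<forall>i. Mv (fst (x i)) = CC)"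
    by (rule cycle_walk_start[where P = "\<lambda>y. Mv (fst y) \<noteq> CC"]) auto
  define p where "p = (\<lambda>i. fst (x i))"
  define a where "a = (\<lambda>i. fst (e i))"
  have x_mod: "x m = x m' \<longleftrightarrow> m mod k = m' mod k" and e_mod: "e m = e m' \<longleftrightarrow> m mod k = m' mod k"
    and k: "1 \<le> k" for m m'
    using cw unfolding cycle_walk_def by auto
  have x_in: "x i \<in> GV" for i using cw sub unfolding cycle_walk_def by (meson rangeI subsetD)
  have gwalk: "walk GA gsrc gtgt x e n" for n
    using cw sub unfolding cycle_walk_def walk_def by (meson subsetD)
  have walk: "walk A s t p a n" for n
    using gamma_walk_project[OF gwalk] unfolding p_def a_def .
  have p_in: "p i \<in> V" for i using x_in[of i] by (cases "x i") (simp add: p_def mem_gamma_vertices_iff)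
  have no_loop: "s (a i) \<noteq> t (a i)" for i
    using loop_is_cycle[OF quiver] walk[of "Suc i"] acyclic unfolding walk_def by blast
  have "a i \<noteq> a (Suc i)" if i: "Suc i < k" for i
    \<comment> \<open>a backtrack would sit at a vertex not carrying C, i.e. at the start, and close the walk early\<close>
  proof
    assume eq: "a i = a (Suc i)"
    have "e i \<noteq> e (Suc i)" using e_mod i by simp
    moreover have "joins gsrc gtgt (e i) (x i) (x (Suc i))" "joins gsrc gtgt (e (Suc i)) (x (Suc i)) (x (Suc (Suc i)))"
      using gwalk[of "Suc (Suc i)"] unfolding walk_def by auto
    ultimately have noncomplex: "Mv (p (Suc i)) \<noteq> CC"
      using lifts_of_same_arrow_meet_at_noncomplex eq no_loop[of i] unfolding a_def p_def by blast
    with start have "Mv (p 0) \<noteq> CC" unfolding p_def by blast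
    with noncomplex unique p_in have "p (Suc i) = p 0" by blast
    with noncomplex \<open>Mv (p 0) \<noteq> CC\<close> x_in[of 0] x_in[of "Suc i"] have "x (Suc i) = x 0"
      unfolding p_def by (cases "x 0", cases "x (Suc i)") (auto simp: mem_gamma_vertices_iff)
    with x_mod i show False by simp
  qed
  moreover have "p k = p 0" using x_mod[of k 0] by (simp add: p_def)
  ultimately have "\<exists>C. is_cycle V A s t C"
    using nonbacktracking_closed_walk_has_cycle[OF walk k] p_in by blast
  with acyclic show False ..
qed

end


theorem lemma6p3:
  fixes V :: "'v set" and A :: "'a set" and s t :: "'a \<Rightarrow> 'v"
    and Mv :: "'v \<Rightarrow> divring" and Mconj :: "'a \<Rightarrow> bool"
  assumes "quiver V A s t"
    and "connected_quiver V A s t"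
    and "\<forall>x \<in> gamma_vertices V Mv.
           one_cycle
             (comp_vertices (gamma_vertices V Mv) (gamma_arrows A s t Mv)
                (gamma_src s t Mv Mconj) (gamma_tgt s t Mv Mconj) x)
             (comp_arrows (gamma_vertices V Mv) (gamma_arrows A s t Mv)
                (gamma_src s t Mv Mconj) (gamma_tgt s t Mv Mconj) x)
             (gamma_src s t Mv Mconj) (gamma_tgt s t Mv Mconj)"
  shows "(\<forall>C1 C2. is_cycle V A s t C1 \<longrightarrow> is_cycle V A s t C2 \<longrightarrow> C1 = C2)
     \<and> (is_tree V A s t \<longrightarrow>
         (\<exists>us as. is_chain V A s t us as \<and> length us \<ge> 2 \<and>
            Mv (hd us) \<noteq> CC \<and> Mv (last us) \<noteq> CC \<and>
            (\<forall>i. 1 \<le> i \<and> i < length us - 1 \<longrightarrow> Mv (us ! i) = CC)))"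
proof -
  interpret modulated_quiver V A s t Mv Mconj by unfold_locales (rule assms(1))
  obtain v0 where "v0 \<in> V" using assms(2) unfolding connected_quiver_def by blast
  then have z: "(v0, False) \<in> GV" by (simp add: mem_gamma_vertices_iff)
  let ?CV = "comp_vertices GV GA gsrc gtgt (v0, False)"
    and ?CA = "comp_arrows GV GA gsrc gtgt (v0, False)"
  have one: "one_cycle ?CV ?CA gsrc gtgt" using assms(3) z by blast
  have "C1 = C2" if cycles: "is_cycle V A s t C1" "is_cycle V A s t C2" for C1 C2
  proof -
    obtain D1 D2 where "is_cycle ?CV ?CA gsrc gtgt D1" "fst ` D1 = C1"
      and "is_cycle ?CV ?CA gsrc gtgt D2" "fst ` D2 = C2"
      using cycle_lifts_to_component[OF assms(2) z cycles(1)]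
        cycle_lifts_to_component[OF assms(2) z cycles(2)] by blast
    with one show ?thesis unfolding one_cycle_def by blast
  qed
  moreover have "\<exists>us as. is_chain V A s t us as \<and> length us \<ge> 2 \<and>
      Mv (hd us) \<noteq> CC \<and> Mv (last us) \<noteq> CC \<and> (\<forall>i. 1 \<le> i \<and> i < length us - 1 \<longrightarrow> Mv (us ! i) = CC)"
    if tree: "is_tree V A s t"
  proof -
    obtain D where "is_cycle ?CV ?CA gsrc gtgt D" using one unfolding one_cycle_def by blast
    moreover have "?CV \<subseteq> GV" "?CA \<subseteq> GA" unfolding comp_vertices_def comp_arrows_def by auto
    ultimately obtain r1 r2 where "r1 \<in> V" "r2 \<in> V" "r1 \<noteq> r2" "Mv r1 \<noteq> CC" "Mv r2 \<noteq> CC"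
      using gamma_cycle_projects_to_cycle tree unfolding is_tree_def by blast
    from connected_quiver_chain_between[OF assms(1,2) this] show ?thesis by simp
  qed
  ultimately show ?thesis by blast
qed

end
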